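(* Let $G$ be a graph in which every edge has even multiplicity, i.e. for every pair of distinct vertices $u,v$ the number of edges joining $u$ and $v$ is even. Let $\mathcal D$ be a decomposition of $G$ into cycles, and let $C\in\mathcal D$. Then $$|\mathcal D|\le \frac{|E(G)|}{2}-|E(C)|+2.$$
   Context: Graphs may have multiple edges but no loops. For $m\ge2$, an $m$-cycle is a cycle with $m$ edges; a $2$-cycle consists of two parallel edges. A cycle decomposition of $G$ is a set of cycles in $G$ whose edge sets partition $E(G)$. *)

theory Defs
  imports Complex_Main
begin

text \<open>A finite multigraph without loops: vertex set V, edge set E (edges are
  abstract objects, so parallel edges are allowed), and an endpoint map
  assigning to each edge a set of exactly two distinct vertices.\<close>
definition multigraph :: "'v set \<Rightarrow> 'e set \<Rightarrow> ('e \<Rightarrow> 'v set) \<Rightarrow> bool" where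
  "multigraph V E ends \<longleftrightarrow> finite V \<and> finite E \<and>
     (\<forall>e\<in>E. ends e \<subseteq> V \<and> card (ends e) = 2)"

definition mult :: "'e set \<Rightarrow> ('e \<Rightarrow> 'v set) \<Rightarrow> 'v \<Rightarrow> 'v \<Rightarrow> nat" where
  "mult E ends u v = card {e\<in>E. ends e = {u, v}}"

text \<open>For m = 2 this is a pair of parallel edges.\<close>
definition is_cycle_in :: "'e set \<Rightarrow> ('e \<Rightarrow> 'v set) \<Rightarrow> 'e set \<Rightarrow> bool" where
  "is_cycle_in E ends C \<longleftrightarrow> C \<subseteq> E \<and>
     (\<exists>(m::nat) (vs::nat \<Rightarrow> 'v) (es::nat \<Rightarrow> 'e). m \<ge> 2 \<and>
        inj_on vs {..<m} \<and> inj_on es {..<m} \<and> C = es ` {..<m} \<and>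
        (\<forall>i<m. ends (es i) = {vs i, vs ((i + 1) mod m)}))"

definition cycle_decomposition :: "'e set \<Rightarrow> ('e \<Rightarrow> 'v set) \<Rightarrow> 'e set set \<Rightarrow> bool" where
  "cycle_decomposition E ends D \<longleftrightarrow>
     (\<forall>C\<in>D. is_cycle_in E ends C) \<and>
     (\<forall>C1\<in>D. \<forall>C2\<in>D. C1 \<noteq> C2 \<longrightarrow> C1 \<inter> C2 = {}) \<and>
     \<Union>D = E"

end

(*
  Represent every cycle of the decomposition by the multiset of its endpoint pairs, and let the
  excess of a nonempty edge multiset with all degrees even be its size minus 2.  It suffices that
  the other cycles have total excess at least |E(C)| - 2, because their excess adds up to
  |E| - |E(C)| - 2(|D| - 1).  This is proved by induction on the length of C: contracting the
  closing edge va of C leaves a cycle one shorter, and keeps both the even degrees of the other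
  cycles and the even multiplicity of every pair.  The excess of each other cycle Z drops by a
  nonnegative amount of the parity of the number of va-edges in Z, and these numbers sum to an
  odd number since va has even multiplicity and C contains it once; so the total excess drops
  by at least 1.
*)

theory Submission
  imports "HOL-Library.Multiset" Defs
begin

lemma size_sum: "size (\<Sum>i\<in>A. M i :: 'a multiset) = (\<Sum>i\<in>A. size (M i))"
  by (induction A rule: infinite_finite_induct) simp_all

lemma image_mset_mset_set_eq_sum: "image_mset f (mset_set A) = (\<Sum>x\<in>A. {#f x#})"
  by (induction A rule: infinite_finite_induct) simp_all

lemma count_sum_mset: "count (\<Sum>\<^sub># W) q = (\<Sum>Z\<in>#W. count Z q)"
  by (induction W) simp_all

lemma sum_mset_nonneg: "(\<And>x. x \<in># M \<Longrightarrow> 0 \<le> f x) \<Longrightarrow> 0 \<le> (\<Sum>x\<in>#M. f x :: 'a::ordered_comm_monoid_add)"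
  by (induction M) auto

lemma sum_mset_subtractf:
  "(\<Sum>x\<in>#M. f x - g x) = (\<Sum>x\<in>#M. f x) - (\<Sum>x\<in>#M. g x :: 'a::ab_group_add)"
  by (induction M) simp_all

lemma even_sum_mset_iff:
  fixes f :: "'a \<Rightarrow> 'b::semiring_parity" and g :: "'a \<Rightarrow> 'c::semiring_parity"
  assumes "\<And>x. x \<in># M \<Longrightarrow> even (f x) \<longleftrightarrow> even (g x)"
  shows "even (\<Sum>x\<in>#M. f x) \<longleftrightarrow> even (\<Sum>x\<in>#M. g x)"
  using assms by (induction M) auto

lemma sum_lessThan_rotate: "(\<Sum>i<m. h (Suc i mod m)) = (\<Sum>i<m. h i :: 'a::comm_monoid_add)"
proof (cases m)
  case (Suc n)
  have "(\<Sum>i<Suc n. h (Suc i mod Suc n)) = (\<Sum>i<n. h (Suc i)) + h 0"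
    by (simp add: sum.lessThan_Suc)
  also have "\<dots> = h 0 + (\<Sum>i<n. h (Suc i))"
    by (rule add.commute)
  also have "\<dots> = (\<Sum>i<Suc n. h i)"
    by (rule sum.lessThan_Suc_shift[symmetric])
  finally show ?thesis using Suc by simp
qed simp

section \<open>Multigraphs as multisets of edges\<close>

definition degree :: "'v \<Rightarrow> 'v set multiset \<Rightarrow> nat" where
  "degree x Z = size (filter_mset (\<lambda>p. x \<in> p) Z)"

definition eulerian :: "'v set multiset \<Rightarrow> bool" where
  "eulerian Z \<longleftrightarrow> (\<forall>p\<in>#Z. card p = 2) \<and> (\<forall>x. even (degree x Z))"

definition excess :: "'v set multiset \<Rightarrow> int" where
  "excess Z = (if Z = {#} then 0 else int (size Z) - 2)"

definition merge :: "'v \<Rightarrow> 'v \<Rightarrow> 'v \<Rightarrow> 'v" where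
  "merge v a y = (if y = v then a else y)"

definition contract :: "'v \<Rightarrow> 'v \<Rightarrow> 'v set multiset \<Rightarrow> 'v set multiset" where
  "contract v a Z = filter_mset (\<lambda>p. card p = 2) (image_mset ((`) (merge v a)) Z)"

lemma degree_empty [simp]: "degree x {#} = 0"
  by (simp add: degree_def)

lemma degree_add_mset [simp]: "degree x (add_mset p Z) = degree x Z + (if x \<in> p then 1 else 0)"
  by (simp add: degree_def)

lemma degree_sum: "degree x (\<Sum>i\<in>A. M i) = (\<Sum>i\<in>A. degree x (M i))"
  by (induction A rule: infinite_finite_induct) (simp_all add: degree_def)

lemma size_ge_2_if_eulerian:
  assumes "eulerian Z" "Z \<noteq> {#}"
  shows "2 \<le> size Z"
proof -
  obtain p where p: "p \<in># Z" using assms(2) by blast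
  moreover have "card p = 2" using p assms(1) by (simp add: eulerian_def)
  ultimately obtain x where "x \<in> p" by fastforce
  then have "degree x Z \<noteq> 0" using p by (auto simp: degree_def)
  moreover have "even (degree x Z)" using assms(1) by (simp add: eulerian_def)
  ultimately have "2 \<le> degree x Z" by presburger
  also have "\<dots> \<le> size Z" unfolding degree_def by (rule size_filter_mset_lesseq)
  finally show ?thesis .
qed

lemma excess_nonneg: "eulerian Z \<Longrightarrow> 0 \<le> excess Z"
  using size_ge_2_if_eulerian[of Z] by (auto simp: excess_def)

lemma contract_empty [simp]: "contract v a {#} = {#}"
  by (simp add: contract_def)

lemma contract_plus [simp]: "contract v a (M + N) = contract v a M + contract v a N"
  by (simp add: contract_def)

lemma contract_sum: "contract v a (\<Sum>i\<in>A. M i) = (\<Sum>i\<in>A. contract v a (M i))"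
  by (induction A rule: infinite_finite_induct) simp_all

lemma contract_sum_mset: "contract v a (\<Sum>\<^sub># W) = \<Sum>\<^sub># (image_mset (contract v a) W)"
  by (induction W) simp_all

lemma card_merge_image:
  assumes "v \<noteq> a" "card p = 2"
  shows "card (merge v a ` p) = 2 \<longleftrightarrow> p \<noteq> {v, a}"
proof -
  obtain y z where p: "p = {y, z}" "y \<noteq> z" using assms(2) by (meson card_2_iff)
  have "card (merge v a ` p) = 2 \<longleftrightarrow> merge v a y \<noteq> merge v a z"
    using p by (simp add: card_insert_if)
  also have "\<dots> \<longleftrightarrow> p \<noteq> {v, a}"
    using p assms(1) by (auto simp: merge_def doubleton_eq_iff)
  finally show ?thesis .
qed

lemma contract_add_mset:
  assumes "v \<noteq> a" "card p = 2"
  shows "contract v a (add_mset p Z) =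
    (if p = {v, a} then contract v a Z else add_mset (merge v a ` p) (contract v a Z))"
  using card_merge_image[OF assms] by (simp add: contract_def)

lemma mem_merge_image:
  assumes "v \<noteq> a"
  shows "x \<in> merge v a ` p \<longleftrightarrow> x \<noteq> v \<and> (x \<in> p \<or> x = a \<and> v \<in> p)"
  using assms by (auto simp: merge_def)

lemma degree_contract:
  assumes "v \<noteq> a" "\<forall>p\<in>#Z. card p = 2"
  shows "degree x (contract v a Z) + (if x = a then 2 * count Z {v, a} else 0) =
    (if x = v then 0 else if x = a then degree a Z + degree v Z else degree x Z)"
  using assms(2)
proof (induction Z)
  case (add p Z)
  then have "card p = 2" by simp
  then obtain y z where p: "p = {y, z}" "y \<noteq> z" by (meson card_2_iff)
  show ?case
  proof (cases "p = {v, a}")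
    case True
    then show ?thesis using add assms(1) \<open>card p = 2\<close> by (auto simp: contract_add_mset)
  next
    case False
    then have "\<not> (v \<in> p \<and> a \<in> p)" using p assms(1) by auto
    then show ?thesis using add False assms(1) \<open>card p = 2\<close>
      by (cases "x = v"; cases "x = a"; simp add: contract_add_mset mem_merge_image)
  qed
qed simp

lemma eulerian_contract:
  assumes "v \<noteq> a" "eulerian Z"
  shows "eulerian (contract v a Z)"
  unfolding eulerian_def
proof (intro conjI allI ballI)
  show "card p = 2" if "p \<in># contract v a Z" for p
    using that by (simp add: contract_def)
  have edges: "\<forall>p\<in>#Z. card p = 2" and even: "\<And>x. even (degree x Z)"
    using assms(2) by (auto simp: eulerian_def)
  show "even (degree x (contract v a Z))" for x
  proof (cases "x = a")
    case True
    have "degree a (contract v a Z) + 2 * count Z {v, a} = degree a Z + degree v Z"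
      using degree_contract[OF assms(1) edges, of a] assms(1) by simp
    then show ?thesis using True even[of a] even[of v] by presburger
  next
    case False
    then show ?thesis using degree_contract[OF assms(1) edges, of x] even[of x] by auto
  qed
qed

lemma size_contract:
  assumes "v \<noteq> a" "\<forall>p\<in>#Z. card p = 2"
  shows "size (contract v a Z) + count Z {v, a} = size Z"
  using assms(2) by (induction Z) (auto simp: contract_add_mset[OF assms(1)])

lemma excess_contract:
  assumes "v \<noteq> a" "eulerian Z"
  shows "0 \<le> excess Z - excess (contract v a Z)
    \<and> (even (excess Z - excess (contract v a Z)) \<longleftrightarrow> even (count Z {v, a}))"
proof -
  have size: "size (contract v a Z) + count Z {v, a} = size Z"
    using size_contract[OF assms(1)] assms(2) by (simp add: eulerian_def)
  show ?thesis
  proof (cases "contract v a Z = {#}")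
    case True
    then show ?thesis
      using size size_ge_2_if_eulerian[OF assms(2)] by (auto simp: excess_def)
  next
    case False
    then have "Z \<noteq> {#}" by auto
    then have "excess Z - excess (contract v a Z) = int (count Z {v, a})"
      using size False by (auto simp: excess_def)
    then show ?thesis by simp
  qed
qed

lemma excess_sum_mset_contract:
  assumes "v \<noteq> a" "\<forall>Z\<in>#W. eulerian Z" "odd (\<Sum>Z\<in>#W. count Z {v, a})"
  shows "1 \<le> (\<Sum>Z\<in>#W. excess Z - excess (contract v a Z))"
proof -
  have "even (\<Sum>Z\<in>#W. excess Z - excess (contract v a Z))
      \<longleftrightarrow> even (\<Sum>Z\<in>#W. count Z {v, a})"
    by (rule even_sum_mset_iff) (use excess_contract[OF assms(1)] assms(2) in blast)
  moreover have "0 \<le> (\<Sum>Z\<in>#W. excess Z - excess (contract v a Z))"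
    using excess_contract[OF assms(1)] assms(2) by (auto intro: sum_mset_nonneg)
  ultimately show ?thesis using assms(3) by presburger
qed

lemma even_count_contract:
  assumes "\<forall>q. even (count M q)"
  shows "even (count (contract v a M) q)"
  using assms by (simp add: contract_def count_image_mset dvd_sum)

section \<open>Cycles and their contraction\<close>

definition cycle_mset :: "(nat \<Rightarrow> 'v) \<Rightarrow> nat \<Rightarrow> 'v set multiset" where
  "cycle_mset vs m = (\<Sum>i<m. {#{vs i, vs (Suc i mod m)}#})"

lemma size_cycle_mset: "size (cycle_mset vs m) = m"
  by (simp add: cycle_mset_def size_sum)

lemma cycle_neighbours_distinct:
  assumes "m \<ge> 2" "inj_on vs {..<m}" "i < m"
  shows "vs i \<noteq> vs (Suc i mod m)"
proof
  assume "vs i = vs (Suc i mod m)"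
  then have "i = Suc i mod m" using assms by (intro inj_onD[OF assms(2)]) auto
  moreover have "i \<noteq> Suc i mod m"
    using assms(1,3) by (cases "Suc i = m") auto
  ultimately show False by simp
qed

lemma eulerian_cycle_mset:
  assumes "m \<ge> 2" "inj_on vs {..<m}"
  shows "eulerian (cycle_mset vs m)"
  unfolding eulerian_def
proof (intro conjI allI ballI)
  fix p assume "p \<in># cycle_mset vs m"
  then obtain i where "i < m" "p = {vs i, vs (Suc i mod m)}"
    by (auto simp: cycle_mset_def set_mset_sum)
  then show "card p = 2" using cycle_neighbours_distinct[OF assms] by simp
next
  fix x
  let ?d = "\<lambda>i. if x = vs i then 1 else 0 :: nat"
  have "degree x (cycle_mset vs m) = (\<Sum>i<m. ?d i + ?d (Suc i mod m))"
    unfolding cycle_mset_def degree_sum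
  proof (rule sum.cong)
    fix i assume "i \<in> {..<m}"
    then have "vs i \<noteq> vs (Suc i mod m)" using cycle_neighbours_distinct[OF assms] by simp
    then show "degree x {#{vs i, vs (Suc i mod m)}#} = ?d i + ?d (Suc i mod m)"
      by (simp add: degree_def)
  qed simp
  also have "\<dots> = 2 * (\<Sum>i<m. ?d i)"
    by (simp add: sum.distrib sum_lessThan_rotate[of ?d])
  finally show "even (degree x (cycle_mset vs m))" by simp
qed

lemma count_cycle_mset_closing_edge:
  assumes "n \<ge> 2" "inj_on vs {..<Suc n}"
  shows "count (cycle_mset vs (Suc n)) {vs n, vs 0} = 1"
proof -
  have "{vs i, vs (Suc i)} \<noteq> {vs n, vs 0}" if "i < n" for i
  proof
    assume "{vs i, vs (Suc i)} = {vs n, vs 0}"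
    moreover have "vs i \<noteq> vs n" using inj_onD[OF assms(2), of i n] that by auto
    ultimately have "vs i = vs 0" "vs (Suc i) = vs n" by (auto simp: doubleton_eq_iff)
    then have "i = 0" "Suc i = n" using inj_onD[OF assms(2)] that by auto
    then show False using assms(1) by simp
  qed
  then show ?thesis
    by (simp add: cycle_mset_def count_sum sum.lessThan_Suc)
qed

lemma contract_cycle_mset:
  assumes "n \<ge> 2" "inj_on vs {..<Suc n}"
  shows "contract (vs n) (vs 0) (cycle_mset vs (Suc n)) = cycle_mset vs n"
proof -
  have vs_n: "vs i \<noteq> vs n" if "i < n" for i using inj_onD[OF assms(2), of i n] that by auto
  have edge: "contract (vs n) (vs 0) {#{vs i, vs (Suc i mod Suc n)}#} = {#{vs i, vs (Suc i mod n)}#}"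
    if "i < n" for i
  proof -
    have "merge (vs n) (vs 0) ` {vs i, vs (Suc i mod Suc n)} = {vs i, vs (Suc i mod n)}"
      using vs_n[OF that] vs_n[of "Suc i"] that by (cases "Suc i = n") (auto simp: merge_def)
    moreover have "inj_on vs {..<n}" using assms(2) by (rule inj_on_subset) auto
    then have "card {vs i, vs (Suc i mod n)} = 2"
      using cycle_neighbours_distinct[of n vs i] assms(1) that by simp
    ultimately show ?thesis by (simp add: contract_def)
  qed
  have closing_edge: "contract (vs n) (vs 0) {#{vs n, vs 0}#} = {#}"
    by (simp add: contract_def merge_def)
  have "cycle_mset vs (Suc n) = (\<Sum>i<n. {#{vs i, vs (Suc i mod Suc n)}#}) + {#{vs n, vs 0}#}"
    by (simp add: cycle_mset_def sum.lessThan_Suc del: mod_Suc_eq)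
  then have "contract (vs n) (vs 0) (cycle_mset vs (Suc n)) =
      (\<Sum>i<n. contract (vs n) (vs 0) {#{vs i, vs (Suc i mod Suc n)}#})"
    by (simp only: contract_plus contract_sum closing_edge add_0_right)
  also have "\<dots> = cycle_mset vs n"
    unfolding cycle_mset_def by (intro sum.cong refl edge) simp
  finally show ?thesis .
qed

lemma cycle_length_le_excess:
  assumes "m \<ge> 2" "inj_on vs {..<m}" "\<forall>Z\<in>#W. eulerian Z"
    and "\<forall>q. even (count (cycle_mset vs m + \<Sum>\<^sub># W) q)"
  shows "int m - 2 \<le> (\<Sum>Z\<in>#W. excess Z)"
  using assms
proof (induction m arbitrary: vs W rule: nat_induct_at_least)
  case base
  then show ?case by (simp add: sum_mset_nonneg excess_nonneg)
next
  case (Suc n)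
  define v a where "v = vs n" and "a = vs 0"
  have "v \<noteq> a" using inj_onD[OF Suc.prems(1), of n 0] Suc.hyps by (auto simp: v_def a_def)
  define W' where "W' = image_mset (contract v a) W"
  have "int n - 2 \<le> (\<Sum>Z\<in>#W'. excess Z)"
  proof (rule Suc.IH)
    show "inj_on vs {..<n}" using Suc.prems(1) by (rule inj_on_subset) auto
    show "\<forall>Z\<in>#W'. eulerian Z"
      using Suc.prems(2) eulerian_contract[OF \<open>v \<noteq> a\<close>] by (auto simp: W'_def)
    have "cycle_mset vs n + \<Sum>\<^sub># W' = contract v a (cycle_mset vs (Suc n) + \<Sum>\<^sub># W)"
      unfolding contract_plus contract_sum_mset v_def a_def W'_def
      using contract_cycle_mset[OF Suc.hyps Suc.prems(1)] by simp
    then show "\<forall>q. even (count (cycle_mset vs n + \<Sum>\<^sub># W') q)"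
      using even_count_contract[OF Suc.prems(3)] by simp
  qed
  moreover have "1 \<le> (\<Sum>Z\<in>#W. excess Z - excess (contract v a Z))"
  proof (rule excess_sum_mset_contract[OF \<open>v \<noteq> a\<close> Suc.prems(2)])
    show "odd (\<Sum>Z\<in>#W. count Z {v, a})"
      using Suc.prems(3)[rule_format, of "{v, a}"]
        count_cycle_mset_closing_edge[OF Suc.hyps Suc.prems(1)]
      by (simp add: v_def a_def count_sum_mset)
  qed
  ultimately show ?case
    by (simp add: W'_def sum_mset_subtractf image_mset.compositionality comp_def)
qed

section \<open>Cycle decompositions\<close>

definition edge_mset :: "('e \<Rightarrow> 'v set) \<Rightarrow> 'e set \<Rightarrow> 'v set multiset" where
  "edge_mset ends F = image_mset ends (mset_set F)"

lemma size_edge_mset: "finite F \<Longrightarrow> size (edge_mset ends F) = card F"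
  by (simp add: edge_mset_def)

lemma count_edge_mset: "finite F \<Longrightarrow> count (edge_mset ends F) q = card {e\<in>F. ends e = q}"
  by (simp add: edge_mset_def count_image_mset vimage_def Int_def conj_commute)

lemma edge_mset_cycle:
  assumes "is_cycle_in E ends Z"
  obtains m vs where "2 \<le> m" "inj_on vs {..<m}" "edge_mset ends Z = cycle_mset vs m"
proof -
  obtain m :: nat and vs es where cycle: "m \<ge> 2" "inj_on vs {..<m}"
      and es: "inj_on es {..<m}" "Z = es ` {..<m}"
      and ends: "\<forall>i<m. ends (es i) = {vs i, vs ((i + 1) mod m)}"
    using assms unfolding is_cycle_in_def by blast
  have "edge_mset ends Z = image_mset ends (image_mset es (mset_set {..<m}))"
    unfolding edge_mset_def es(2) image_mset_mset_set[OF es(1)] ..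
  also have "\<dots> = (\<Sum>i<m. {#ends (es i)#})"
    by (subst multiset.map_comp) (simp add: image_mset_mset_set_eq_sum)
  also have "\<dots> = cycle_mset vs m"
    unfolding cycle_mset_def using ends by (intro sum.cong) auto
  finally show ?thesis using that cycle by blast
qed

lemma eulerian_edge_mset_cycle: "is_cycle_in E ends Z \<Longrightarrow> eulerian (edge_mset ends Z)"
  by (metis edge_mset_cycle eulerian_cycle_mset)

lemma excess_edge_mset_cycle:
  assumes "is_cycle_in E ends Z" "finite Z"
  shows "excess (edge_mset ends Z) = int (card Z) - 2"
proof -
  obtain m vs where "2 \<le> m" "inj_on vs {..<m}" "edge_mset ends Z = cycle_mset vs m"
    by (rule edge_mset_cycle[OF assms(1)])
  moreover have "size (edge_mset ends Z) = card Z" using assms(2) by (rule size_edge_mset)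
  ultimately have "size (edge_mset ends Z) = m" "card Z = m" by (simp_all add: size_cycle_mset)
  moreover have "edge_mset ends Z \<noteq> {#}"
    using calculation \<open>2 \<le> m\<close> by (metis not_numeral_le_zero size_empty)
  ultimately show ?thesis by (simp add: excess_def)
qed

lemma edge_mset_Union:
  assumes "finite D" "\<forall>Y\<in>D. finite Y" "\<forall>Y1\<in>D. \<forall>Y2\<in>D. Y1 \<noteq> Y2 \<longrightarrow> Y1 \<inter> Y2 = {}"
  shows "edge_mset ends (\<Union>D) = (\<Sum>Y\<in>D. edge_mset ends Y)"
  using assms
proof (induction D rule: finite_induct)
  case (insert Y D)
  have "Y \<inter> \<Union>D = {}" using insert.hyps(2) insert.prems(2) by fastforce
  have "finite Y" "finite (\<Union>D)" using insert.hyps insert.prems(1) by auto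
  then have "edge_mset ends (Y \<union> \<Union>D) = edge_mset ends Y + edge_mset ends (\<Union>D)"
    using \<open>Y \<inter> \<Union>D = {}\<close> by (simp add: edge_mset_def mset_set_Union)
  moreover have "edge_mset ends (\<Union>D) = (\<Sum>Y\<in>D. edge_mset ends Y)"
    using insert.IH insert.prems by blast
  ultimately show ?case using insert.hyps by simp
qed (simp add: edge_mset_def)

lemma even_count_edge_mset:
  assumes "multigraph V E ends" "\<forall>u v. u \<noteq> v \<longrightarrow> even (mult E ends u v)"
  shows "even (count (edge_mset ends E) q)"
proof (cases "\<exists>e\<in>E. ends e = q")
  case True
  then have "card q = 2" using assms(1) by (auto simp: multigraph_def)
  then obtain u v where "q = {u, v}" "u \<noteq> v" by (meson card_2_iff)
  then show ?thesis
    using assms count_edge_mset[of E ends q] by (auto simp: multigraph_def mult_def)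
next
  case False
  then have "{e\<in>E. ends e = q} = {}" by blast
  moreover have "finite E" using assms(1) by (simp add: multigraph_def)
  ultimately show ?thesis using count_edge_mset[of E ends q] by (metis card.empty even_zero)
qed

lemma cycle_decomposition_finite:
  assumes "finite E" "cycle_decomposition E ends D"
  shows "finite D" "\<forall>Y\<in>D. finite Y"
proof -
  have "\<Union>D = E" using assms(2) by (simp add: cycle_decomposition_def)
  then show "finite D" "\<forall>Y\<in>D. finite Y"
    using assms(1) finite_UnionD finite_subset[OF Union_upper] by auto
qed

lemma edge_mset_cycle_decomposition:
  assumes "finite E" "cycle_decomposition E ends D"
  shows "edge_mset ends E = (\<Sum>Y\<in>D. edge_mset ends Y)"
proof -
  have "\<Union>D = E" and "\<forall>Y1\<in>D. \<forall>Y2\<in>D. Y1 \<noteq> Y2 \<longrightarrow> Y1 \<inter> Y2 = {}"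
    using assms(2) by (auto simp: cycle_decomposition_def)
  then show ?thesis using edge_mset_Union cycle_decomposition_finite[OF assms] by metis
qed

lemma cycle_decomposition_bound:
  assumes "multigraph V E ends" "\<forall>u v. u \<noteq> v \<longrightarrow> even (mult E ends u v)"
    and "cycle_decomposition E ends D" "C \<in> D"
  shows "int (card C) - 2 \<le> (\<Sum>Y\<in>D - {C}. int (card Y) - 2)"
proof -
  have "finite E" using assms(1) by (simp add: multigraph_def)
  note finite = cycle_decomposition_finite[OF this assms(3)]
  have cycles: "\<forall>Y\<in>D. is_cycle_in E ends Y"
    using assms(3) by (simp add: cycle_decomposition_def)
  obtain m vs where m: "2 \<le> m" "inj_on vs {..<m}" and C: "edge_mset ends C = cycle_mset vs m"
    using edge_mset_cycle[of E ends C] cycles assms(4) by blast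
  define W where "W = image_mset (edge_mset ends) (mset_set (D - {C}))"
  have "edge_mset ends E = edge_mset ends C + (\<Sum>Y\<in>D - {C}. edge_mset ends Y)"
    using edge_mset_cycle_decomposition[OF \<open>finite E\<close> assms(3)] sum.remove[OF finite(1) assms(4)]
    by simp
  also have "\<dots> = cycle_mset vs m + \<Sum>\<^sub># W"
    unfolding C W_def sum_unfold_sum_mset ..
  finally have E: "edge_mset ends E = cycle_mset vs m + \<Sum>\<^sub># W" .
  have "int m - 2 \<le> (\<Sum>Z\<in>#W. excess Z)"
  proof (rule cycle_length_le_excess[OF m])
    show "\<forall>Z\<in>#W. eulerian Z"
      using finite(1) cycles by (auto simp: W_def intro: eulerian_edge_mset_cycle[of E])
    show "\<forall>q. even (count (cycle_mset vs m + \<Sum>\<^sub># W) q)"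
      unfolding E[symmetric] using even_count_edge_mset[OF assms(1,2)] ..
  qed
  moreover have "m = card C"
    using size_edge_mset[of C ends] finite assms(4) C by (simp add: size_cycle_mset)
  moreover have "(\<Sum>Z\<in>#W. excess Z) = (\<Sum>Y\<in>D - {C}. int (card Y) - 2)"
  proof -
    have "(\<Sum>Z\<in>#W. excess Z) = (\<Sum>Y\<in>D - {C}. excess (edge_mset ends Y))"
      unfolding W_def sum_unfold_sum_mset multiset.map_comp comp_def ..
    also have "\<dots> = (\<Sum>Y\<in>D - {C}. int (card Y) - 2)"
      using finite cycles by (intro sum.cong refl excess_edge_mset_cycle[of E]) auto
    finally show ?thesis .
  qed
  ultimately show ?thesis by simp
qed

theorem mainTheorem6:
  fixes V :: "'v set" and E :: "'e set" and ends :: "'e \<Rightarrow> 'v set"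
    and D :: "'e set set" and C :: "'e set"
  assumes "multigraph V E ends"
    and "\<forall>u v. u \<noteq> v \<longrightarrow> even (mult E ends u v)"
    and "cycle_decomposition E ends D"
    and "C \<in> D"
  shows "real (card D) \<le> real (card E) / 2 - real (card C) + 2"
proof -
  have "finite E" using assms(1) by (simp add: multigraph_def)
  note finite = cycle_decomposition_finite[OF this assms(3)]
  have "pairwise disjnt D" "\<Union>D = E"
    using assms(3) by (auto simp: cycle_decomposition_def pairwise_def disjnt_def)
  then have "card E = (\<Sum>Y\<in>D. card Y)"
    using card_Union_disjoint[of D] finite(2) by auto
  also have "\<dots> = card C + (\<Sum>Y\<in>D - {C}. card Y)"
    by (rule sum.remove[OF finite(1) assms(4)])
  finally have E: "int (card E) = int (card C) + (\<Sum>Y\<in>D - {C}. int (card Y))"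
    by simp
  have D: "card D = card (D - {C}) + 1"
    using card.remove[OF finite(1) assms(4)] by simp
  have "(\<Sum>Y\<in>D - {C}. int (card Y) - 2) = (\<Sum>Y\<in>D - {C}. int (card Y)) - 2 * int (card (D - {C}))"
    by (simp add: sum_subtractf)
  then have "2 * int (card D) \<le> int (card E) - 2 * int (card C) + 4"
    using cycle_decomposition_bound[OF assms] E D by linarith
  then show ?thesis by linarith
qed

end
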